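(* Let $\gamma_0\in\mathbb{R}$ and let $(X_i)_{i\geq1}$ be i.i.d. with distribution function $F\in D(G_{\gamma_0})$, with normalization constants $a_m=a(m)$, $b_m=U(m)$ where $U=\big(\frac{1}{1-F}\big)^{\leftarrow}$ and $a(t)=\gamma_0U(t)$ if $\gamma_0>0$, $a(t)=-\gamma_0(U(\infty)-U(t))$ if $\gamma_0<0$, $a(t)=U(t)-t^{-1}\int_0^tU(s)ds$ if $\gamma_0=0$. Let $m=m(n)$ be positive integers with $m(n)\to+\infty$. Let $M_{k,m}=\max(X_{(k-1)m+1},\ldots,X_{km})$, $\widetilde M_{k,m}=(M_{k,m}-b_m)/a_m$, and $\mathbb{P}_n[f]=\frac1n\sum_{k=1}^n f(\widetilde M_{k,m(n)})$. Then for every upper semi-continuous function $f:\mathbb{R}\to[-\infty,+\infty)$ that is bounded from above, \[ \limsup_{n\to+\infty}\mathbb{P}_n[f]\leq G_{\gamma_0}[f]\quad\text{almost surely}, \] where $G_{\gamma_0}[f]=\int f\,dG_{\gamma_0}\in[-\infty,+\infty)$.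
   Context: For $\gamma\in\mathbb{R}$, $G_\gamma$ denotes the generalized extreme value distribution with distribution function $F_\gamma(x)=\exp(-(1+\gamma x)^{-1/\gamma})$ for $1+\gamma x>0$ (interpreted as $\exp(-e^{-x})$ when $\gamma=0$). $F\in D(G_\gamma)$ means there exist constants $a_m>0$, $b_m$ with $F^m(a_mx+b_m)\to F_\gamma(x)$ for all real $x$; the constants in the claim are a valid choice. $U=\big(\frac{1}{1-F}\big)^{\leftarrow}$ denotes the left-continuous inverse of $1/(1-F)$. *)

theory Defs
  imports "HOL-Probability.Probability"
begin

definition gev_cdf :: "real \<Rightarrow> real \<Rightarrow> real" where
  "gev_cdf \<gamma> x =
     (if \<gamma> = 0 then exp (- exp (- x))
      else if 1 + \<gamma> * x > 0 then exp (- ((1 + \<gamma> * x) powr (- 1 / \<gamma>)))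
      else if \<gamma> > 0 then 0 else 1)"

definition gev_measure :: "real \<Rightarrow> real measure" where
  "gev_measure \<gamma> = interval_measure (gev_cdf \<gamma>)"

definition gev_normalizes :: "(real \<Rightarrow> real) \<Rightarrow> real \<Rightarrow> (nat \<Rightarrow> real) \<Rightarrow> (nat \<Rightarrow> real) \<Rightarrow> bool" where
  "gev_normalizes F \<gamma> a b \<longleftrightarrow>
     (\<forall>m\<ge>1. a m > 0) \<and>
     (\<forall>x. (\<lambda>m. (F (a m * x + b m)) ^ m) \<longlonglongrightarrow> gev_cdf \<gamma> x)"

definition in_DoA :: "(real \<Rightarrow> real) \<Rightarrow> real \<Rightarrow> bool" where
  "in_DoA F \<gamma> \<longleftrightarrow> (\<exists>a b. gev_normalizes F \<gamma> a b)"

definition usc :: "(real \<Rightarrow> ereal) \<Rightarrow> bool" where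
  "usc f \<longleftrightarrow> (\<forall>x. Limsup (at x) f \<le> f x)"

definition ext_integral :: "real measure \<Rightarrow> (real \<Rightarrow> ereal) \<Rightarrow> ereal" where
  "ext_integral G f =
     enn2ereal (\<integral>\<^sup>+ x. e2ennreal (max 0 (f x)) \<partial>G)
     - enn2ereal (\<integral>\<^sup>+ x. e2ennreal (max 0 (- f x)) \<partial>G)"

definition block_max_norm ::
  "(nat \<Rightarrow> 'a \<Rightarrow> real) \<Rightarrow> (nat \<Rightarrow> real) \<Rightarrow> (nat \<Rightarrow> real) \<Rightarrow> nat \<Rightarrow> nat \<Rightarrow> 'a \<Rightarrow> real" where
  "block_max_norm X a b m k \<omega> =
     (Max ((\<lambda>i. X i \<omega>) ` {(k - 1) * m + 1 .. k * m}) - b m) / a m"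

definition emp_block :: "(nat \<Rightarrow> 'a \<Rightarrow> real) \<Rightarrow> (nat \<Rightarrow> real) \<Rightarrow> (nat \<Rightarrow> real) \<Rightarrow> (nat \<Rightarrow> nat)
    \<Rightarrow> (real \<Rightarrow> ereal) \<Rightarrow> nat \<Rightarrow> 'a \<Rightarrow> ereal" where
  "emp_block X a b m f n \<omega> =
     ereal (1 / real n) * (\<Sum>k = 1..n. f (block_max_norm X a b (m n) k \<omega>))"

end

theory Submission
  imports Defs "HOL-Real_Asymp.Real_Asymp"
begin

text \<open>Fix a level t. The events that the normalized block maxima of the n-th row are at most t
  are independent, each of probability F(a_m t + b_m)^m \<rightarrow> G(t), so Hoeffding's inequality and
  Borel--Cantelli make the empirical distribution function of the normalized block maxima converge
  almost surely at every rational t, and by monotonicity at every continuity point of G: almost surely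
  the empirical measures converge weakly to G. If c bounds f from above, c - f is nonnegative and
  lower semicontinuous, so Skorohod's representation and Fatou's lemma give
  \<integral>(c - f) dG \<le> liminf of the empirical means of c - f, which is the claim.\<close>

section \<open>The generalized extreme value distribution\<close>

lemma gev_cdf_0: "gev_cdf 0 = (\<lambda>x. exp (- exp (- x)))"
  by (simp add: gev_cdf_def fun_eq_iff)

lemma gev_cdf_on_support:
  "\<gamma> \<noteq> 0 \<Longrightarrow> 1 + \<gamma> * x > 0 \<Longrightarrow> gev_cdf \<gamma> x = exp (- ((1 + \<gamma> * x) powr (- 1 / \<gamma>)))"
  by (simp add: gev_cdf_def)

lemma gev_cdf_off_support:
  "\<gamma> \<noteq> 0 \<Longrightarrow> 1 + \<gamma> * x \<le> 0 \<Longrightarrow> gev_cdf \<gamma> x = (if \<gamma> > 0 then 0 else 1)"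
  by (simp add: gev_cdf_def)

lemma gev_cdf_continuous_at_right: "continuous (at_right x) (gev_cdf \<gamma>)"
proof -
  define g where "g y = exp (- ((1 + \<gamma> * y) powr (- 1 / \<gamma>)))" for y
  have affine: "((\<lambda>y. 1 + \<gamma> * y) \<longlongrightarrow> 1 + \<gamma> * x) (at_right x)"
    by (intro tendsto_intros)
  have right: "eventually (\<lambda>y. x < y) (at_right x)"
    by (simp add: eventually_at_right_less)
  consider "\<gamma> = 0" | "\<gamma> \<noteq> 0" "1 + \<gamma> * x > 0" | "\<gamma> > 0" "1 + \<gamma> * x = 0"
    | "\<gamma> \<noteq> 0" "1 + \<gamma> * x < 0 \<or> \<gamma> < 0 \<and> 1 + \<gamma> * x = 0"
    by fastforce
  then have "(gev_cdf \<gamma> \<longlongrightarrow> gev_cdf \<gamma> x) (at_right x)"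
  proof cases
    case 1
    then show ?thesis by (simp add: gev_cdf_0) (intro tendsto_intros)
  next
    case 2
    have "eventually (\<lambda>y. 1 + \<gamma> * y > 0) (at_right x)"
      using order_tendstoD(1)[OF affine] 2 by simp
    then have "eventually (\<lambda>y. g y = gev_cdf \<gamma> y) (at_right x)"
      by eventually_elim (use 2 in \<open>simp add: g_def gev_cdf_on_support\<close>)
    moreover have "(g \<longlongrightarrow> g x) (at_right x)"
      unfolding g_def using 2 by (intro tendsto_intros) auto
    ultimately show ?thesis
      using 2 by (simp add: g_def gev_cdf_on_support Lim_transform_eventually)
  next
    case 3
    then have x: "x = - 1 / \<gamma>" by (simp add: field_simps)
    have "(g \<longlongrightarrow> 0) (at_right (- 1 / \<gamma>))"
      unfolding g_def using 3 by real_asymp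
    moreover have "eventually (\<lambda>y. g y = gev_cdf \<gamma> y) (at_right x)"
      using right
    proof eventually_elim
      case (elim y)
      then have "1 + \<gamma> * y > 0" using 3 mult_strict_left_mono[OF elim, of \<gamma>] by linarith
      then show ?case using 3 by (simp add: g_def gev_cdf_on_support)
    qed
    ultimately show ?thesis
      using 3 x by (simp add: gev_cdf_off_support Lim_transform_eventually)
  next
    case 4
    have "eventually (\<lambda>y. 1 + \<gamma> * y \<le> 0) (at_right x)"
    proof (cases "1 + \<gamma> * x < 0")
      case True
      from order_tendstoD(2)[OF affine True] show ?thesis by eventually_elim simp
    next
      case False
      with 4 have "\<gamma> < 0" "1 + \<gamma> * x = 0" by auto
      from right show ?thesis
        by eventually_elim (use \<open>\<gamma> < 0\<close> \<open>1 + \<gamma> * x = 0\<close> in \<open>smt (verit) mult_less_cancel_left_neg\<close>)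
    qed
    then have "eventually (\<lambda>y. gev_cdf \<gamma> x = gev_cdf \<gamma> y) (at_right x)"
      by eventually_elim (use 4 in \<open>auto simp: gev_cdf_off_support\<close>)
    then show ?thesis by (rule Lim_transform_eventually[OF tendsto_const])
  qed
  then show ?thesis by (simp add: continuous_within)
qed


lemma gev_cdf_at_top: "(gev_cdf \<gamma> \<longlongrightarrow> 1) at_top"
proof -
  consider "\<gamma> = 0" | "\<gamma> > 0" | "\<gamma> < 0" by fastforce
  then show ?thesis
  proof cases
    case 1
    then show ?thesis by (simp add: gev_cdf_0) real_asymp
  next
    case 2
    have "((\<lambda>x. exp (- ((1 + \<gamma> * x) powr (- 1 / \<gamma>)))) \<longlongrightarrow> 1) at_top"
      using 2 by real_asymp
    moreover have "eventually (\<lambda>x. 1 + \<gamma> * x > 0) at_top"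
      using 2 by real_asymp
    then have "eventually (\<lambda>x. exp (- ((1 + \<gamma> * x) powr (- 1 / \<gamma>))) = gev_cdf \<gamma> x) at_top"
      by eventually_elim (use 2 in \<open>simp add: gev_cdf_on_support\<close>)
    ultimately show ?thesis by (rule Lim_transform_eventually)
  next
    case 3
    have "eventually (\<lambda>x. 1 + \<gamma> * x < 0) at_top"
      using 3 by real_asymp
    then have "eventually (\<lambda>x. 1 = gev_cdf \<gamma> x) at_top"
      by eventually_elim (use 3 in \<open>simp add: gev_cdf_off_support\<close>)
    then show ?thesis by (rule Lim_transform_eventually[OF tendsto_const])
  qed
qed

lemma gev_cdf_at_bot: "(gev_cdf \<gamma> \<longlongrightarrow> 0) at_bot"
proof -
  consider "\<gamma> = 0" | "\<gamma> > 0" | "\<gamma> < 0" by fastforce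
  then show ?thesis
  proof cases
    case 1
    then show ?thesis by (simp add: gev_cdf_0) real_asymp
  next
    case 2
    have "eventually (\<lambda>x. 1 + \<gamma> * x < 0) at_bot"
      using 2 by real_asymp
    then have "eventually (\<lambda>x. 0 = gev_cdf \<gamma> x) at_bot"
      by eventually_elim (use 2 in \<open>simp add: gev_cdf_off_support\<close>)
    then show ?thesis by (rule Lim_transform_eventually[OF tendsto_const])
  next
    case 3
    have "((\<lambda>x. exp (- ((1 + \<gamma> * x) powr (- 1 / \<gamma>)))) \<longlongrightarrow> 0) at_bot"
      using 3 by real_asymp
    moreover have "eventually (\<lambda>x. 1 + \<gamma> * x > 0) at_bot"
      using 3 by real_asymp
    then have "eventually (\<lambda>x. exp (- ((1 + \<gamma> * x) powr (- 1 / \<gamma>))) = gev_cdf \<gamma> x) at_bot"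
      by eventually_elim (use 3 in \<open>simp add: gev_cdf_on_support\<close>)
    ultimately show ?thesis by (rule Lim_transform_eventually)
  qed
qed

text \<open>Monotonicity of gev_cdf is inherited from the powers F^m, of which it is the pointwise limit;
  this avoids a case analysis on the sign of the index.\<close>

lemma mono_gev_cdf_if_normalizes:
  assumes "mono F" and "\<And>x. F x \<ge> 0" and N: "gev_normalizes F \<gamma> a b"
  shows "mono (gev_cdf \<gamma>)"
proof (rule monoI, rule LIMSEQ_le)
  fix x y :: real assume "x \<le> y"
  show "(\<lambda>m. F (a m * x + b m) ^ m) \<longlonglongrightarrow> gev_cdf \<gamma> x" "(\<lambda>m. F (a m * y + b m) ^ m) \<longlonglongrightarrow> gev_cdf \<gamma> y"
    using N unfolding gev_normalizes_def by auto
  have "F (a m * x + b m) ^ m \<le> F (a m * y + b m) ^ m" if "m \<ge> 1" for m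
  proof -
    have "a m > 0" using N that unfolding gev_normalizes_def by auto
    with \<open>x \<le> y\<close> show ?thesis by (intro power_mono monoD[OF \<open>mono F\<close>] assms(2)) simp
  qed
  then show "\<exists>N. \<forall>m\<ge>N. F (a m * x + b m) ^ m \<le> F (a m * y + b m) ^ m" by blast
qed

lemma real_distribution_gev_measure:
  "mono (gev_cdf \<gamma>) \<Longrightarrow> real_distribution (gev_measure \<gamma>)"
  unfolding gev_measure_def
  by (rule real_distribution_interval_measure)
    (auto intro: monoD gev_cdf_continuous_at_right gev_cdf_at_top gev_cdf_at_bot)

lemma cdf_gev_measure: "mono (gev_cdf \<gamma>) \<Longrightarrow> cdf (gev_measure \<gamma>) = gev_cdf \<gamma>"
  unfolding gev_measure_def cdf_def fun_eq_iff
  by (intro allI measure_interval_measure_Iic) (auto intro: monoD gev_cdf_continuous_at_right gev_cdf_at_bot)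

section \<open>Block maxima\<close>

lemma card_block: "k \<ge> 1 \<Longrightarrow> card {(k - 1) * m + 1 .. k * m} = m"
  for k m :: nat
  by (cases k) auto

lemma disjoint_family_on_blocks: "disjoint_family_on (\<lambda>k. {(k - 1) * m + 1 .. k * m}) {1..n}"
  for m n :: nat
  unfolding disjoint_family_on_def
proof (intro ballI impI)
  fix k l assume "k \<in> {1..n}" "l \<in> {1..n}" "k \<noteq> l"
  moreover have "{(k - 1) * m + 1 .. k * m} \<inter> {(l - 1) * m + 1 .. l * m} = {}" if "k < l" for k l
  proof -
    have km: "k * m \<le> (l - 1) * m" using that by (intro mult_le_mono1) linarith
    have "i \<notin> {(l - 1) * m + 1 .. l * m}" if "i \<in> {(k - 1) * m + 1 .. k * m}" for i
      using that km by (simp only: atLeastAtMost_iff) linarith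
    then show ?thesis by blast
  qed
  ultimately show "{(k - 1) * m + 1 .. k * m} \<inter> {(l - 1) * m + 1 .. l * m} = {}"
    by (metis inf_commute linorder_neqE_nat)
qed

lemma block_max_norm_le_iff:
  assumes "k \<ge> 1" "m > 0" "a m > 0"
  shows "block_max_norm X a b m k \<omega> \<le> t \<longleftrightarrow> (\<forall>i\<in>{(k - 1) * m + 1 .. k * m}. X i \<omega> \<le> a m * t + b m)"
proof -
  have "{(k - 1) * m + 1 .. k * m} \<noteq> {}"
    using card_block[OF \<open>k \<ge> 1\<close>, of m] \<open>m > 0\<close> by auto
  then show ?thesis
    using \<open>a m > 0\<close> by (simp add: block_max_norm_def pos_divide_le_eq algebra_simps)
qed

context prob_space
begin

lemma mono_prob_le:
  fixes Y :: "'a \<Rightarrow> real"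
  assumes [measurable]: "Y \<in> borel_measurable M"
  shows "mono (\<lambda>x. prob {\<omega> \<in> space M. Y \<omega> \<le> x})"
proof -
  have "{\<omega> \<in> space M. Y \<omega> \<le> y} \<in> events" for y
    by measurable
  then show ?thesis
    by (intro monoI finite_measure_mono) auto
qed

lemma indep_vars_block_indicators:
  fixes X :: "nat \<Rightarrow> 'a \<Rightarrow> real"
  assumes indep: "indep_vars (\<lambda>_. borel) X {1..}"
  shows "indep_vars (\<lambda>_. borel)
    (\<lambda>k \<omega>. of_bool (\<forall>i\<in>{(k - 1) * m + 1 .. k * m}. X i \<omega> \<le> c) :: real) {1..n}"
proof -
  let ?K = "\<lambda>k. {(k - 1) * m + 1 .. k * m}"
  have "indep_vars (\<lambda>k. PiM (?K k) (\<lambda>_. borel)) (\<lambda>k \<omega>. restrict (\<lambda>i. X i \<omega>) (?K k)) {1..n}"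
    by (rule indep_vars_restrict[OF indep _ disjoint_family_on_blocks]) auto
  then have "indep_vars (\<lambda>_. borel)
      (\<lambda>k \<omega>. of_bool (\<forall>i\<in>?K k. restrict (\<lambda>i. X i \<omega>) (?K k) i \<le> c) :: real) {1..n}"
    by (rule indep_vars_compose2) (simp add: pred_intros_finite)
  then show ?thesis
    by (rule indep_vars_cong[THEN iffD1, rotated 3]) auto
qed

lemma expectation_block_indicator:
  fixes X :: "nat \<Rightarrow> 'a \<Rightarrow> real"
  assumes indep: "indep_vars (\<lambda>_. borel) X {1..}" and "k \<ge> 1" "m > 0"
    and F: "\<And>i x. i \<ge> 1 \<Longrightarrow> prob {\<omega> \<in> space M. X i \<omega> \<le> x} = F x"
  shows "expectation (\<lambda>\<omega>. of_bool (\<forall>i\<in>{(k - 1) * m + 1 .. k * m}. X i \<omega> \<le> c)) = F c ^ m"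
proof -
  let ?K = "{(k - 1) * m + 1 .. k * m}"
  let ?A = "\<lambda>i. X i -` {..c} \<inter> space M"
  have ne: "?K \<noteq> {}"
    using card_block[OF \<open>k \<ge> 1\<close>, of m] \<open>m > 0\<close> by auto
  have "indep_sets (\<lambda>i. {X i -` A \<inter> space M | A. A \<in> sets borel}) {1..}"
    using indep by (simp add: indep_vars_def2)
  note indep_block = indep_setsD[OF this, of ?K ?A]
  have "expectation (\<lambda>\<omega>. of_bool (\<forall>i\<in>?K. X i \<omega> \<le> c))
      = expectation (indicator {\<omega> \<in> space M. \<forall>i\<in>?K. X i \<omega> \<le> c})"
    by (rule Bochner_Integration.integral_cong) (auto simp: indicator_def)
  also have "\<dots> = prob (\<Inter>i\<in>?K. ?A i)"
    using ne by (simp add: Int_absorb2) (intro arg_cong[where f = prob]; blast)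
  also have "\<dots> = (\<Prod>i\<in>?K. prob (?A i))"
    by (rule indep_block) (use ne in \<open>auto intro!: exI[of _ "{..c}"]\<close>)
  also have "\<dots> = F c ^ m"
    using F card_block[OF \<open>k \<ge> 1\<close>] by (simp add: vimage_def Int_def conj_commute)
  finally show ?thesis .
qed

end

section \<open>A strong law of large numbers for triangular arrays of bounded variables\<close>

context prob_space
begin

lemma prob_row_sum_deviation_le:
  fixes Z :: "nat \<Rightarrow> 'a \<Rightarrow> real"
  assumes "indep_vars (\<lambda>_. borel) Z {1..n}" and "\<And>k \<omega>. Z k \<omega> \<in> {0..1}"
    and "n \<ge> 1" and "\<delta> > 0" and E: "\<And>k. k \<in> {1..n} \<Longrightarrow> expectation (Z k) = p"
  shows "prob {\<omega>\<in>space M. \<bar>(\<Sum>k\<in>{1..n}. Z k \<omega>) - n * p\<bar> \<ge> n * \<delta>} \<le> 2 * exp (-2 * \<delta>\<^sup>2) ^ n"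
proof -
  interpret Hoeffding_ineq M "{1..n}" Z "\<lambda>_. 0" "\<lambda>_. 1" "\<Sum>i\<in>{1..n}. expectation (Z i)"
    by unfold_locales (use assms in auto)
  have "(\<Sum>i\<in>{1..n}. expectation (Z i)) = n * p" using E by simp
  then have "prob {\<omega>\<in>space M. \<bar>(\<Sum>k\<in>{1..n}. Z k \<omega>) - n * p\<bar> \<ge> n * \<delta>}
      \<le> 2 * exp (-2 * (n * \<delta>)\<^sup>2 / (\<Sum>i\<in>{1..n}. (1 - 0)\<^sup>2))"
    using Hoeffding_ineq_abs_ge[of "n * \<delta>"] assms by simp
  also have "-2 * (n * \<delta>)\<^sup>2 / (\<Sum>i\<in>{1..n}. (1 - 0)\<^sup>2) = real n * (-2 * \<delta>\<^sup>2)"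
    using \<open>n \<ge> 1\<close> by (simp add: power2_eq_square)
  finally show ?thesis by (simp only: exp_of_nat_mult)
qed

lemma AE_eventually_row_mean_close:
  fixes Z :: "nat \<Rightarrow> nat \<Rightarrow> 'a \<Rightarrow> real"
  assumes ind: "\<And>n. indep_vars (\<lambda>_. borel) (Z n) {1..n}" and bnd: "\<And>n k \<omega>. Z n k \<omega> \<in> {0..1}"
    and E: "\<And>n k. k \<in> {1..n} \<Longrightarrow> expectation (Z n k) = p n" and "\<delta> > 0"
  shows "AE \<omega> in M. eventually (\<lambda>n. \<bar>(\<Sum>k\<in>{1..n}. Z n k \<omega>) / n - p n\<bar> < \<delta>) sequentially"
proof -
  define A where "A n = {\<omega>\<in>space M. \<bar>(\<Sum>k\<in>{1..n}. Z n k \<omega>) - n * p n\<bar> \<ge> n * \<delta>}" for n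
  have "(\<lambda>\<omega>. \<Sum>k\<in>{1..n}. Z n k \<omega>) \<in> borel_measurable M" for n
    by (rule borel_measurable_sum) (use ind in \<open>auto simp: indep_vars_def\<close>)
  then have A_sets: "A n \<in> events" for n
    unfolding A_def by measurable
  have "summable (\<lambda>n. 2 * exp (-2 * \<delta>\<^sup>2) ^ n)"
    using \<open>\<delta> > 0\<close> by (intro summable_mult summable_geometric) auto
  then have "summable (\<lambda>n. prob (A n))"
    by (rule summable_comparison_test'[where N = 1])
      (use prob_row_sum_deviation_le[OF ind bnd _ \<open>\<delta> > 0\<close> E] in \<open>simp add: A_def\<close>)
  then have "AE \<omega> in M. eventually (\<lambda>n. \<omega> \<in> space M - A n) sequentially"
    by (intro borel_cantelli_AE1 A_sets) (auto simp: emeasure_eq_measure)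
  then show ?thesis
  proof (rule AE_mp, intro AE_I2 impI)
    fix \<omega> assume "\<omega> \<in> space M" and ev: "eventually (\<lambda>n. \<omega> \<in> space M - A n) sequentially"
    from eventually_ge_at_top[of 1] ev
    show "eventually (\<lambda>n. \<bar>(\<Sum>k\<in>{1..n}. Z n k \<omega>) / n - p n\<bar> < \<delta>) sequentially"
    proof eventually_elim
      case (elim n)
      then have "\<bar>(\<Sum>k\<in>{1..n}. Z n k \<omega>) - n * p n\<bar> < n * \<delta>"
        using \<open>\<omega> \<in> space M\<close> by (auto simp: A_def)
      moreover have "(\<Sum>k\<in>{1..n}. Z n k \<omega>) / n - p n = ((\<Sum>k\<in>{1..n}. Z n k \<omega>) - n * p n) / n"
        using elim by (simp add: field_simps)
      ultimately show ?case
        using elim by (simp add: abs_divide pos_divide_less_eq mult.commute)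
    qed
  qed
qed

lemma AE_row_means_tendsto:
  fixes Z :: "nat \<Rightarrow> nat \<Rightarrow> 'a \<Rightarrow> real"
  assumes ind: "\<And>n. indep_vars (\<lambda>_. borel) (Z n) {1..n}" and bnd: "\<And>n k \<omega>. Z n k \<omega> \<in> {0..1}"
    and E: "\<And>n k. k \<in> {1..n} \<Longrightarrow> expectation (Z n k) = p n" and p: "p \<longlonglongrightarrow> L"
  shows "AE \<omega> in M. (\<lambda>n. (\<Sum>k\<in>{1..n}. Z n k \<omega>) / n) \<longlonglongrightarrow> L"
proof -
  have "AE \<omega> in M. \<forall>j::nat. eventually
      (\<lambda>n. \<bar>(\<Sum>k\<in>{1..n}. Z n k \<omega>) / n - p n\<bar> < inverse (Suc j)) sequentially"
    unfolding AE_all_countable by (intro allI AE_eventually_row_mean_close[OF ind bnd E]) auto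
  then show ?thesis
  proof (rule AE_mp, intro AE_I2 impI)
    fix \<omega> assume close: "\<forall>j::nat. eventually
      (\<lambda>n. \<bar>(\<Sum>k\<in>{1..n}. Z n k \<omega>) / n - p n\<bar> < inverse (Suc j)) sequentially"
    have "(\<lambda>n. (\<Sum>k\<in>{1..n}. Z n k \<omega>) / n - p n) \<longlonglongrightarrow> 0"
      unfolding tendsto_iff dist_real_def
    proof (intro allI impI)
      fix e :: real assume "e > 0"
      then obtain j where j: "inverse (Suc j) < e"
        using reals_Archimedean by blast
      from close[rule_format, of j]
      show "eventually (\<lambda>n. \<bar>(\<Sum>k\<in>{1..n}. Z n k \<omega>) / n - p n - 0\<bar> < e) sequentially"
        by eventually_elim (use j in simp)
    qed
    from tendsto_add[OF this p] show "(\<lambda>n. (\<Sum>k\<in>{1..n}. Z n k \<omega>) / n) \<longlonglongrightarrow> L"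
      by simp
  qed
qed

end

section \<open>Upper semicontinuous functions\<close>

lemma usc_eventually_less:
  assumes "usc f" "f x < z"
  shows "eventually (\<lambda>y. f y < z) (nhds x)"
proof -
  have "Limsup (at x) f < z"
    using assms unfolding usc_def by (meson le_less_trans)
  then show ?thesis
    using assms(2) by (simp add: eventually_nhds_conv_at Limsup_lessD)
qed

lemma usc_open_less:
  assumes "usc f" shows "open {y. f y < z}"
proof (rule open_subopen[THEN iffD2], rule ballI)
  fix x assume "x \<in> {y. f y < z}"
  then have "eventually (\<lambda>y. f y < z) (nhds x)"
    by (intro usc_eventually_less[OF assms]) simp
  then obtain T where "open T" "x \<in> T" "\<forall>y\<in>T. f y < z"
    unfolding eventually_nhds by blast
  then show "\<exists>T. open T \<and> x \<in> T \<and> T \<subseteq> {y. f y < z}" by blast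
qed

lemma borel_measurable_usc: "usc f \<Longrightarrow> f \<in> borel_measurable borel"
  by (rule borel_measurableI_less) (simp add: usc_open_less)

lemma ennreal_less_e2ennreal_minus_iff:
  assumes "y \<le> ereal c" "r \<ge> 0"
  shows "ennreal r < e2ennreal (ereal c - y) \<longleftrightarrow> y < ereal (c - r)"
  using assms by (cases y) (auto simp: ennreal_less_iff intro: ennreal_lessI)

lemma liminf_deficit_ge_if_usc:
  assumes "usc f" and fc: "\<And>y. f y \<le> ereal c" and "Y \<longlonglongrightarrow> x"
  shows "e2ennreal (ereal c - f x) \<le> liminf (\<lambda>n. e2ennreal (ereal c - f (Y n)))"
  unfolding le_Liminf_iff
proof (intro allI impI)
  fix z assume z: "z < e2ennreal (ereal c - f x)"
  then obtain r where r: "z = ennreal r" "r \<ge> 0" by (cases z rule: ennreal_cases) auto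
  then have "f x < ereal (c - r)"
    using z ennreal_less_e2ennreal_minus_iff[OF fc] by simp
  then have "eventually (\<lambda>y. f y < ereal (c - r)) (nhds x)"
    by (rule usc_eventually_less[OF \<open>usc f\<close>])
  then have "eventually (\<lambda>n. f (Y n) < ereal (c - r)) sequentially"
    using \<open>Y \<longlonglongrightarrow> x\<close> unfolding filterlim_iff by blast
  then show "eventually (\<lambda>n. z < e2ennreal (ereal c - f (Y n))) sequentially"
    by eventually_elim (simp add: r ennreal_less_e2ennreal_minus_iff[OF fc])
qed

section \<open>Weak convergence and lower semicontinuous integrands\<close>

lemma nn_integral_le_liminf_if_weak_conv:
  fixes h :: "real \<Rightarrow> ennreal"
  assumes \<mu>: "\<And>n. real_distribution (\<mu> n)" and G: "real_distribution G" and "weak_conv_m \<mu> G"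
    and h[measurable]: "h \<in> borel_measurable borel"
    and lsc: "\<And>x Y. Y \<longlonglongrightarrow> x \<Longrightarrow> h x \<le> liminf (\<lambda>n. h (Y n))"
  shows "(\<integral>\<^sup>+ x. h x \<partial>G) \<le> liminf (\<lambda>n. \<integral>\<^sup>+ x. h x \<partial>\<mu> n)"
proof -
  from Skorohod[OF \<mu> G \<open>weak_conv_m \<mu> G\<close>] obtain \<Omega> :: "real measure" and Ys Y
    where "prob_space \<Omega>" and Ys[measurable]: "\<And>n. Ys n \<in> borel_measurable \<Omega>"
      and Ys_distr: "\<And>n. distr \<Omega> borel (Ys n) = \<mu> n" and "Y \<in> measurable \<Omega> lborel"
      and Y_distr: "distr \<Omega> borel Y = G" and lim: "\<And>\<omega>. \<omega> \<in> space \<Omega> \<Longrightarrow> (\<lambda>n. Ys n \<omega>) \<longlonglongrightarrow> Y \<omega>"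
    by blast
  then have [measurable]: "Y \<in> borel_measurable \<Omega>" by simp
  have "(\<integral>\<^sup>+ x. h x \<partial>G) = (\<integral>\<^sup>+ \<omega>. h (Y \<omega>) \<partial>\<Omega>)"
    unfolding Y_distr[symmetric] by (rule nn_integral_distr) simp_all
  also have "\<dots> \<le> (\<integral>\<^sup>+ \<omega>. liminf (\<lambda>n. h (Ys n \<omega>)) \<partial>\<Omega>)"
    by (intro nn_integral_mono lsc lim)
  also have "\<dots> \<le> liminf (\<lambda>n. \<integral>\<^sup>+ \<omega>. h (Ys n \<omega>) \<partial>\<Omega>)"
    by (rule nn_integral_liminf) simp
  also have "(\<lambda>n. \<integral>\<^sup>+ \<omega>. h (Ys n \<omega>) \<partial>\<Omega>) = (\<lambda>n. \<integral>\<^sup>+ x. h x \<partial>\<mu> n)"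
    unfolding Ys_distr[symmetric] by (intro ext nn_integral_distr[symmetric]) simp_all
  finally show ?thesis .
qed

text \<open>The sample size is clamped to 1 so that the empirical measure is a probability measure also
  for n = 0.\<close>

definition empirical_measure :: "(nat \<Rightarrow> real) \<Rightarrow> nat \<Rightarrow> real measure" where
  "empirical_measure x n = distr (measure_pmf (pmf_of_set {1..max 1 n})) borel x"

lemma real_distribution_empirical_measure: "real_distribution (empirical_measure x n)"
  unfolding empirical_measure_def
  by (rule prob_space.real_distribution_distr) (auto simp: prob_space_measure_pmf)

lemma cdf_empirical_measure:
  assumes "n \<ge> 1"
  shows "cdf (empirical_measure x n) t = (\<Sum>k\<in>{1..n}. of_bool (x k \<le> t)) / n"
proof -
  have "cdf (empirical_measure x n) t = measure (measure_pmf (pmf_of_set {1..n})) (x -` {..t})"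
    using assms unfolding cdf_def empirical_measure_def by (subst measure_distr) auto
  also have "\<dots> = card ({1..n} \<inter> x -` {..t}) / n"
    using assms by (subst measure_pmf_of_set) auto
  finally show ?thesis by (simp add: vimage_def Int_def)
qed

lemma nn_integral_empirical_measure:
  assumes "n \<ge> 1" and "h \<in> borel_measurable borel"
  shows "(\<integral>\<^sup>+ y. h y \<partial>empirical_measure x n) = (\<Sum>k\<in>{1..n}. h (x k)) / of_nat n"
proof -
  have "(\<integral>\<^sup>+ y. h y \<partial>empirical_measure x n) = (\<integral>\<^sup>+ k. h (x k) \<partial>measure_pmf (pmf_of_set {1..n}))"
    using assms unfolding empirical_measure_def by (subst nn_integral_distr) auto
  also have "\<dots> = (\<Sum>k\<in>{1..n}. h (x k)) / of_nat n"
    using assms by (subst nn_integral_pmf_of_set) auto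
  finally show ?thesis .
qed

section \<open>Means of functions bounded from above\<close>

lemma limsup_const_minus_le:
  fixes I :: "nat \<Rightarrow> ennreal"
  assumes J: "J \<le> liminf I"
  shows "limsup (\<lambda>n. ereal c - enn2ereal (I n)) \<le> ereal c - enn2ereal J"
  unfolding Limsup_le_iff
proof (intro allI impI)
  fix y assume y: "y > ereal c - enn2ereal J"
  show "eventually (\<lambda>n. y > ereal c - enn2ereal (I n)) sequentially"
  proof (cases "y > ereal c")
    case True
    have "ereal c - enn2ereal (I n) \<le> ereal c" for n
      using enn2ereal_nonneg[of "I n"] by (cases "enn2ereal (I n)") auto
    then show ?thesis using True by (intro always_eventually allI) (meson le_less_trans)
  next
    case False
    moreover have "y \<noteq> -\<infinity>" using y by auto
    ultimately obtain w where w: "y = ereal w" "w \<le> c" by (cases y) auto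
    have "ennreal (c - w) < J"
    proof (cases J rule: ennreal_cases)
      case (real j)
      then have "c - w < j" using y w by simp
      then show ?thesis using real w by (simp add: ennreal_lessI)
    qed simp
    then have "eventually (\<lambda>n. ennreal (c - w) < I n) sequentially"
      using J le_Liminf_iff by fastforce
    then show ?thesis
    proof eventually_elim
      case (elim n)
      then show ?case
        using w by (cases "I n" rule: ennreal_cases) (auto simp: ennreal_less_iff)
    qed
  qed
qed

lemma ereal_mean_le_bound_minus_mean_deficit:
  fixes v :: "nat \<Rightarrow> ereal"
  assumes vc: "\<And>k. v k \<le> ereal c" and "n \<ge> 1"
  shows "ereal (1 / real n) * (\<Sum>k = 1..n. v k)
     \<le> ereal c - enn2ereal ((\<Sum>k = 1..n. e2ennreal (ereal c - v k)) / of_nat n)"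
proof (cases "\<exists>k\<in>{1..n}. v k = -\<infinity>")
  case True
  then obtain k0 where k0: "k0 \<in> {1..n}" "v k0 = -\<infinity>" by blast
  have "(\<Sum>k\<in>{1..n} - {k0}. v k) \<le> (\<Sum>k\<in>{1..n} - {k0}. ereal c)"
    by (intro sum_mono vc)
  then have "(\<Sum>k\<in>{1..n} - {k0}. v k) \<noteq> \<infinity>" by auto
  moreover have "(\<Sum>k = 1..n. v k) = v k0 + (\<Sum>k\<in>{1..n} - {k0}. v k)"
    using k0 by (subst sum.remove[of _ k0]) auto
  ultimately have "(\<Sum>k = 1..n. v k) = -\<infinity>" using k0 by simp
  then show ?thesis using \<open>n \<ge> 1\<close> by simp
next
  case False
  define r where "r k = real_of_ereal (v k)" for k
  have v_eq: "v k = ereal (r k)" if "k \<in> {1..n}" for k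
  proof -
    have "v k \<noteq> -\<infinity>" "v k \<noteq> \<infinity>"
      using False that vc[of k] by auto
    then show ?thesis unfolding r_def by (cases "v k") auto
  qed
  have rc: "r k \<le> c" if "k \<in> {1..n}" for k using vc[of k] v_eq[OF that] by simp
  have "(\<Sum>k = 1..n. e2ennreal (ereal c - v k)) = (\<Sum>k = 1..n. ennreal (c - r k))"
    by (simp add: v_eq e2ennreal_ereal)
  also have "\<dots> = ennreal (\<Sum>k = 1..n. c - r k)"
    using rc by (intro sum_ennreal) auto
  finally have deficit: "(\<Sum>k = 1..n. e2ennreal (ereal c - v k)) = ennreal (\<Sum>k = 1..n. c - r k)" .
  have "(\<Sum>k = 1..n. v k) = ereal (\<Sum>k = 1..n. r k)"
    by (simp add: v_eq)
  moreover have "0 \<le> (\<Sum>k = 1..n. c - r k)" using rc by (intro sum_nonneg) auto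
  moreover have "c - (\<Sum>k = 1..n. c - r k) / n = (\<Sum>k = 1..n. r k) / n"
    using \<open>n \<ge> 1\<close> by (simp add: sum_subtractf field_simps)
  ultimately show ?thesis
    unfolding deficit using \<open>n \<ge> 1\<close> by (simp add: ennreal_of_nat_eq_real_of_nat divide_ennreal)
qed

lemma e2ennreal_pos_plus_deficit:
  assumes "y \<le> ereal c" "c \<ge> 0"
  shows "e2ennreal (max 0 y) + e2ennreal (ereal c - y) = ennreal c + e2ennreal (max 0 (- y))"
proof (cases y)
  case (real r)
  then have "r \<le> c" using assms by simp
  have "e2ennreal (max 0 y) + e2ennreal (ereal c - y) = ennreal (max 0 r) + ennreal (c - r)"
    using real by (simp add: e2ennreal_ereal max_def)
  also have "\<dots> = ennreal (max 0 r + (c - r))"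
    using \<open>r \<le> c\<close> by (simp add: ennreal_plus)
  also have "max 0 r + (c - r) = c + max 0 (- r)"
    by (simp add: max_def)
  also have "ennreal (c + max 0 (- r)) = ennreal c + ennreal (max 0 (- r))"
    using \<open>c \<ge> 0\<close> by (simp add: ennreal_plus)
  finally show ?thesis
    using real by (simp add: e2ennreal_ereal max_def)
next
  case PInf
  then show ?thesis using assms by simp
next
  case MInf
  then show ?thesis by (simp add: e2ennreal_ereal)
qed

lemma ext_integral_ge_bound_minus_deficit:
  fixes G :: "real measure" and f :: "real \<Rightarrow> ereal"
  assumes "prob_space G" and [measurable]: "f \<in> borel_measurable G"
    and fc: "\<And>x. f x \<le> ereal c" and "c \<ge> 0"
  shows "ereal c - enn2ereal (\<integral>\<^sup>+ x. e2ennreal (ereal c - f x) \<partial>G) \<le> ext_integral G f"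
proof -
  interpret prob_space G by fact
  define P where "P = (\<integral>\<^sup>+ x. e2ennreal (max 0 (f x)) \<partial>G)"
  define N where "N = (\<integral>\<^sup>+ x. e2ennreal (max 0 (- f x)) \<partial>G)"
  define H where "H = (\<integral>\<^sup>+ x. e2ennreal (ereal c - f x) \<partial>G)"
  have "P + H = (\<integral>\<^sup>+ x. e2ennreal (max 0 (f x)) + e2ennreal (ereal c - f x) \<partial>G)"
    unfolding P_def H_def by (rule nn_integral_add[symmetric]) measurable
  also have "\<dots> = (\<integral>\<^sup>+ x. ennreal c + e2ennreal (max 0 (- f x)) \<partial>G)"
    using e2ennreal_pos_plus_deficit[OF fc \<open>c \<ge> 0\<close>] by simp
  also have "\<dots> = ennreal c + N"
    unfolding N_def by (subst nn_integral_add) (simp_all add: emeasure_space_1)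
  finally have PHN: "P + H = ennreal c + N" .
  have "P \<le> (\<integral>\<^sup>+ x. ennreal c \<partial>G)"
    unfolding P_def
  proof (rule nn_integral_mono)
    fix x
    show "e2ennreal (max 0 (f x)) \<le> ennreal c"
      using fc[of x] \<open>c \<ge> 0\<close> by (cases "f x") (auto simp: e2ennreal_ereal max_def intro: ennreal_leI)
  qed
  then obtain p where p: "P = ennreal p" "p \<ge> 0"
    by (cases P rule: ennreal_cases) (auto simp: emeasure_space_1 top_unique)
  show ?thesis
  proof (cases H rule: ennreal_cases)
    case (real h)
    have "N \<le> ennreal (p + h)"
      using PHN p real by (metis add.commute add_increasing2 ennreal_plus le_iff_add zero_le)
    then obtain q where q: "N = ennreal q" "q \<ge> 0"
      by (cases N rule: ennreal_cases) (auto simp: top_unique)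
    have "ennreal (p + h) = ennreal (c + q)"
      using PHN p q real \<open>c \<ge> 0\<close> by (simp add: ennreal_plus)
    then have "p + h = c + q"
      using p q real \<open>c \<ge> 0\<close> by (subst (asm) ennreal_inj) auto
    then show ?thesis
      unfolding H_def[symmetric] ext_integral_def P_def[symmetric] N_def[symmetric]
      using p q real by simp
  qed (simp add: H_def)
qed

lemma limsup_mean_le_ext_integral:
  fixes x :: "nat \<Rightarrow> nat \<Rightarrow> real" and f :: "real \<Rightarrow> ereal"
  assumes G: "real_distribution G"
    and conv: "\<And>t. isCont (cdf G) t \<Longrightarrow> (\<lambda>n. (\<Sum>k\<in>{1..n}. of_bool (x n k \<le> t)) / n) \<longlonglongrightarrow> cdf G t"
    and "usc f" and fc: "\<And>y. f y \<le> ereal c" and "c \<ge> 0"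
  shows "limsup (\<lambda>n. ereal (1 / real n) * (\<Sum>k = 1..n. f (x n k))) \<le> ext_integral G f"
proof -
  define h where "h y = e2ennreal (ereal c - f y)" for y
  define I where "I n = (\<integral>\<^sup>+ y. h y \<partial>empirical_measure (x n) n)" for n
  have [measurable]: "f \<in> borel_measurable borel"
    using \<open>usc f\<close> by (rule borel_measurable_usc)
  then have h_meas: "h \<in> borel_measurable borel"
    unfolding h_def by measurable
  have "weak_conv_m (\<lambda>n. empirical_measure (x n) n) G"
    unfolding weak_conv_m_def weak_conv_def
  proof (intro allI impI)
    fix t assume "isCont (cdf G) t"
    from conv[OF this] show "(\<lambda>n. cdf (empirical_measure (x n) n) t) \<longlonglongrightarrow> cdf G t"
      by (rule Lim_transform_eventually)
        (use eventually_ge_at_top[of 1] in \<open>eventually_elim, simp add: cdf_empirical_measure\<close>)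
  qed
  then have "(\<integral>\<^sup>+ y. h y \<partial>G) \<le> liminf I"
    unfolding I_def using real_distribution_empirical_measure G h_meas
      liminf_deficit_ge_if_usc[OF \<open>usc f\<close> fc]
    by (intro nn_integral_le_liminf_if_weak_conv) (auto simp: h_def)
  have "limsup (\<lambda>n. ereal (1 / real n) * (\<Sum>k = 1..n. f (x n k))) \<le> limsup (\<lambda>n. ereal c - enn2ereal (I n))"
  proof (rule Limsup_mono)
    show "eventually (\<lambda>n. ereal (1 / real n) * (\<Sum>k = 1..n. f (x n k)) \<le> ereal c - enn2ereal (I n)) sequentially"
      using eventually_ge_at_top[of 1]
    proof eventually_elim
      case (elim n)
      then show ?case
        using ereal_mean_le_bound_minus_mean_deficit[of "\<lambda>k. f (x n k)", OF fc elim]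
        unfolding I_def nn_integral_empirical_measure[OF elim h_meas] by (simp add: h_def)
    qed
  qed
  also have "\<dots> \<le> ereal c - enn2ereal (\<integral>\<^sup>+ y. h y \<partial>G)"
    by (rule limsup_const_minus_le) fact
  also have "\<dots> \<le> ext_integral G f"
    unfolding h_def using G fc \<open>c \<ge> 0\<close> \<open>f \<in> borel_measurable borel\<close>
    by (intro ext_integral_ge_bound_minus_deficit)
      (auto simp: real_distribution_def real_distribution.events_eq_borel cong: measurable_cong_sets)
  finally show ?thesis .
qed

section \<open>Almost sure convergence of the empirical distribution functions\<close>

lemma tendsto_at_isCont_if_tendsto_on_rats:
  fixes F :: "nat \<Rightarrow> real \<Rightarrow> real" and G :: "real \<Rightarrow> real"
  assumes mono: "\<And>n s t. s \<le> t \<Longrightarrow> F n s \<le> F n t"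
    and rats: "\<And>q. q \<in> \<rat> \<Longrightarrow> (\<lambda>n. F n q) \<longlonglongrightarrow> G q"
    and "isCont G t"
  shows "(\<lambda>n. F n t) \<longlonglongrightarrow> G t"
proof (rule order_tendstoI)
  have lim: "(G \<longlongrightarrow> G t) (at t)" using \<open>isCont G t\<close> by (simp add: isCont_def)
  fix z assume "z < G t"
  then obtain d where "d > 0" and d: "\<And>s. s \<noteq> t \<Longrightarrow> dist s t < d \<Longrightarrow> z < G s"
    using order_tendstoD(1)[OF lim] unfolding eventually_at by blast
  obtain q where q: "q \<in> \<rat>" "t - d < q" "q < t"
    using Rats_dense_in_real[of "t - d" t] \<open>d > 0\<close> by auto
  have "z < G q" using d[of q] q by (simp add: dist_real_def)
  from order_tendstoD(1)[OF rats[OF \<open>q \<in> \<rat>\<close>] this]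
  show "eventually (\<lambda>n. z < F n t) sequentially"
    by eventually_elim (use mono[of q t] q in \<open>auto intro: less_le_trans\<close>)
next
  have lim: "(G \<longlongrightarrow> G t) (at t)" using \<open>isCont G t\<close> by (simp add: isCont_def)
  fix z assume "G t < z"
  then obtain d where "d > 0" and d: "\<And>s. s \<noteq> t \<Longrightarrow> dist s t < d \<Longrightarrow> G s < z"
    using order_tendstoD(2)[OF lim] unfolding eventually_at by blast
  obtain q where q: "q \<in> \<rat>" "t < q" "q < t + d"
    using Rats_dense_in_real[of t "t + d"] \<open>d > 0\<close> by auto
  have "G q < z" using d[of q] q by (simp add: dist_real_def)
  from order_tendstoD(2)[OF rats[OF \<open>q \<in> \<rat>\<close>] this]
  show "eventually (\<lambda>n. F n t < z) sequentially"
    by eventually_elim (use mono[of t q] q in \<open>auto intro: le_less_trans\<close>)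
qed

lemma (in prob_space) AE_block_frequency_tendsto_gev_cdf:
  fixes X :: "nat \<Rightarrow> 'a \<Rightarrow> real"
  assumes indep: "indep_vars (\<lambda>_. borel) X {1..}"
    and F: "\<And>i x. i \<ge> 1 \<Longrightarrow> prob {\<omega> \<in> space M. X i \<omega> \<le> x} = F x"
    and N: "gev_normalizes F \<gamma> a b" and m_pos: "\<And>n. m n > 0" and m_lim: "filterlim m at_top sequentially"
  shows "AE \<omega> in M. (\<lambda>n. (\<Sum>k\<in>{1..n}. of_bool (block_max_norm X a b (m n) k \<omega> \<le> t)) / n)
    \<longlonglongrightarrow> gev_cdf \<gamma> t"
proof -
  define Z where "Z = (\<lambda>n k \<omega>. of_bool (\<forall>i\<in>{(k - 1) * m n + 1 .. k * m n}.
    X i \<omega> \<le> a (m n) * t + b (m n)) :: real)"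
  have "indep_vars (\<lambda>_. borel) (Z n) {1..n}" for n
    unfolding Z_def by (rule indep_vars_block_indicators[OF indep])
  moreover have "Z n k \<omega> \<in> {0..1}" for n k \<omega>
    by (simp add: Z_def)
  moreover have "expectation (Z n k) = F (a (m n) * t + b (m n)) ^ m n" if "k \<in> {1..n}" for n k
    unfolding Z_def by (rule expectation_block_indicator[OF indep _ m_pos F]) (use that in auto)
  moreover have "(\<lambda>m. F (a m * t + b m) ^ m) \<longlonglongrightarrow> gev_cdf \<gamma> t"
    using N unfolding gev_normalizes_def by blast
  from filterlim_compose[OF this m_lim]
  have "(\<lambda>n. F (a (m n) * t + b (m n)) ^ m n) \<longlonglongrightarrow> gev_cdf \<gamma> t" .
  ultimately have "AE \<omega> in M. (\<lambda>n. (\<Sum>k\<in>{1..n}. Z n k \<omega>) / n) \<longlonglongrightarrow> gev_cdf \<gamma> t"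
    by (rule AE_row_means_tendsto)
  moreover have "Z n k \<omega> = of_bool (block_max_norm X a b (m n) k \<omega> \<le> t)" if "k \<in> {1..n}" for n k \<omega>
  proof -
    have "a (m n) > 0" using N m_pos[of n] unfolding gev_normalizes_def by auto
    moreover have "k \<ge> 1" using that by simp
    ultimately show ?thesis
      unfolding Z_def by (simp add: block_max_norm_le_iff[OF _ m_pos])
  qed
  ultimately show ?thesis by (elim AE_mp) (intro AE_I2 impI, simp)
qed

lemma (in prob_space) AE_block_frequency_tendsto_at_isCont:
  fixes X :: "nat \<Rightarrow> 'a \<Rightarrow> real"
  assumes indep: "indep_vars (\<lambda>_. borel) X {1..}"
    and F: "\<And>i x. i \<ge> 1 \<Longrightarrow> prob {\<omega> \<in> space M. X i \<omega> \<le> x} = F x"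
    and N: "gev_normalizes F \<gamma> a b" and m_pos: "\<And>n. m n > 0" and m_lim: "filterlim m at_top sequentially"
  shows "AE \<omega> in M. \<forall>t. isCont (gev_cdf \<gamma>) t \<longrightarrow>
    (\<lambda>n. (\<Sum>k\<in>{1..n}. of_bool (block_max_norm X a b (m n) k \<omega> \<le> t)) / n) \<longlonglongrightarrow> gev_cdf \<gamma> t"
proof -
  define freq where "freq n t \<omega> = (\<Sum>k\<in>{1..n}. of_bool (block_max_norm X a b (m n) k \<omega> \<le> t)) / real n"
    for n t \<omega>
  have "AE \<omega> in M. \<forall>q\<in>\<rat>. (\<lambda>n. freq n q \<omega>) \<longlonglongrightarrow> gev_cdf \<gamma> q"
    unfolding freq_def using AE_block_frequency_tendsto_gev_cdf[OF indep F N m_pos m_lim]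
    by (subst AE_ball_countable[OF countable_rat]) auto
  then have "AE \<omega> in M. \<forall>t. isCont (gev_cdf \<gamma>) t \<longrightarrow> (\<lambda>n. freq n t \<omega>) \<longlonglongrightarrow> gev_cdf \<gamma> t"
  proof (rule AE_mp, intro AE_I2 impI allI)
    fix \<omega> t assume rats: "\<forall>q\<in>\<rat>. (\<lambda>n. freq n q \<omega>) \<longlonglongrightarrow> gev_cdf \<gamma> q"
      and "isCont (gev_cdf \<gamma>) t"
    show "(\<lambda>n. freq n t \<omega>) \<longlonglongrightarrow> gev_cdf \<gamma> t"
    proof (rule tendsto_at_isCont_if_tendsto_on_rats[where F = "\<lambda>n t. freq n t \<omega>"])
      fix n and s t :: real assume "s \<le> t"
      then show "freq n s \<omega> \<le> freq n t \<omega>"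
        unfolding freq_def by (intro divide_right_mono sum_mono) auto
    qed (use rats \<open>isCont (gev_cdf \<gamma>) t\<close> in auto)
  qed
  then show ?thesis
    unfolding freq_def .
qed

theorem lemma2p3:
  fixes M :: "'a measure" and X :: "nat \<Rightarrow> 'a \<Rightarrow> real" and F :: "real \<Rightarrow> real"
    and \<gamma>0 :: real and a b :: "nat \<Rightarrow> real" and m :: "nat \<Rightarrow> nat" and f :: "real \<Rightarrow> ereal"
  assumes "prob_space M"
    and "\<And>i. i \<ge> 1 \<Longrightarrow> X i \<in> borel_measurable M"
    and "prob_space.indep_vars M (\<lambda>_. borel) X {1..}"
    and "\<And>i x. i \<ge> 1 \<Longrightarrow> measure M {\<omega> \<in> space M. X i \<omega> \<le> x} = F x"
    and "in_DoA F \<gamma>0"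
    and "gev_normalizes F \<gamma>0 a b"
    and "\<And>n. m n > 0"
    and "filterlim m at_top sequentially"
    and "usc f"
    and "\<exists>c::real. \<forall>x. f x \<le> ereal c"
  shows "AE \<omega> in M. limsup (\<lambda>n. emp_block X a b m f n \<omega>) \<le> ext_integral (gev_measure \<gamma>0) f"
proof -
  interpret prob_space M by fact
  obtain c0 where "\<forall>x. f x \<le> ereal c0"
    using assms(10) by blast
  then obtain c where fc: "\<And>x. f x \<le> ereal c" and "c \<ge> 0"
    by (intro that[of "max c0 0"]) (auto intro: order_trans)
  have "F = (\<lambda>x. prob {\<omega> \<in> space M. X 1 \<omega> \<le> x})"
    using assms(4)[of 1] by auto
  then have "mono F" and "\<And>x. F x \<ge> 0"
    using mono_prob_le[OF assms(2)[of 1]] by simp_all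
  with assms(6) have G_mono: "mono (gev_cdf \<gamma>0)"
    by (intro mono_gev_cdf_if_normalizes)
  have "AE \<omega> in M. \<forall>t. isCont (gev_cdf \<gamma>0) t \<longrightarrow>
      (\<lambda>n. (\<Sum>k\<in>{1..n}. of_bool (block_max_norm X a b (m n) k \<omega> \<le> t)) / n) \<longlonglongrightarrow> gev_cdf \<gamma>0 t"
    by (rule AE_block_frequency_tendsto_at_isCont[OF assms(3) _ assms(6-8)]) (rule assms(4))
  then show ?thesis
    unfolding emp_block_def
    by (rule eventually_mono)
      (intro limsup_mean_le_ext_integral[OF real_distribution_gev_measure[OF G_mono] _ assms(9) fc \<open>c \<ge> 0\<close>],
        simp add: cdf_gev_measure[OF G_mono])
qed

end
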